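(* Let $\mathsf G=(\mathsf V,\mathsf E)$ be a finite connected graph without loops or multiple edges, with discrete Laplacian $\mathcal L=\mathcal I\mathcal I^T$. Then the semigroup $(e^{-t\mathcal L^2})_{t\ge0}$ is eventually $\ell^\infty$-contractive, hence eventually sub-Markovian: there exists $t_0>0$ such that for all $t\ge t_0$ the matrix $e^{-t\mathcal L^2}$ is positive (maps vectors with nonnegative entries to vectors with nonnegative entries) and satisfies $\|e^{-t\mathcal L^2}f\|_\infty\le\|f\|_\infty$ for all $f$.
   Context: $V=|\mathsf V|$ and functions on vertices are vectors in $\mathbb C^V$. After fixing an arbitrary orientation of the edges, the incidence matrix $\mathcal I\in\mathbb R^{V\times E}$ has entries $\iota_{\mathsf v\mathsf e}=-1$ if $\mathsf v$ is the initial endpoint of $\mathsf e$, $+1$ if $\mathsf v$ is the terminal endpoint of $\mathsf e$, and $0$ otherwise; $\mathcal L=\mathcal I\mathcal I^T$. *)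

theory Defs
  imports Complex_Main
begin

definition simple_graph :: "('v \<Rightarrow> 'v \<Rightarrow> bool) \<Rightarrow> bool" where
  "simple_graph E \<longleftrightarrow> (\<forall>u v. E u v \<longrightarrow> E v u) \<and> (\<forall>v. \<not> E v v)"

definition connected_graph :: "('v \<Rightarrow> 'v \<Rightarrow> bool) \<Rightarrow> bool" where
  "connected_graph E \<longleftrightarrow> (\<forall>u v. E\<^sup>*\<^sup>* u v)"

definition orientation :: "('v \<Rightarrow> 'v \<Rightarrow> bool) \<Rightarrow> ('v \<times> 'v) set \<Rightarrow> bool" where
  "orientation E Eo \<longleftrightarrow> (\<forall>u v. (u, v) \<in> Eo \<longrightarrow> E u v) \<and>
     (\<forall>u v. E u v \<longrightarrow> ((u, v) \<in> Eo \<longleftrightarrow> (v, u) \<notin> Eo))"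

definition incidence :: "'v \<Rightarrow> 'v \<times> 'v \<Rightarrow> real" where
  "incidence v e = (if v = fst e then -1 else if v = snd e then 1 else 0)"

definition laplacian :: "('v \<times> 'v) set \<Rightarrow> 'v \<Rightarrow> 'v \<Rightarrow> real" where
  "laplacian Eo v w = (\<Sum>e\<in>Eo. incidence v e * incidence w e)"

definition mat_mult :: "('v::finite \<Rightarrow> 'v \<Rightarrow> real) \<Rightarrow> ('v \<Rightarrow> 'v \<Rightarrow> real) \<Rightarrow> 'v \<Rightarrow> 'v \<Rightarrow> real" where
  "mat_mult A B i j = (\<Sum>k\<in>UNIV. A i k * B k j)"

fun mat_pow :: "('v::finite \<Rightarrow> 'v \<Rightarrow> real) \<Rightarrow> nat \<Rightarrow> 'v \<Rightarrow> 'v \<Rightarrow> real" where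
  "mat_pow A 0 = (\<lambda>i j. if i = j then 1 else 0)"
| "mat_pow A (Suc n) = mat_mult A (mat_pow A n)"

definition mat_exp :: "('v::finite \<Rightarrow> 'v \<Rightarrow> real) \<Rightarrow> 'v \<Rightarrow> 'v \<Rightarrow> real" where
  "mat_exp A i j = (\<Sum>k. mat_pow A k i j / fact k)"

definition mat_vec :: "('v::finite \<Rightarrow> 'v \<Rightarrow> real) \<Rightarrow> ('v \<Rightarrow> complex) \<Rightarrow> 'v \<Rightarrow> complex" where
  "mat_vec A f i = (\<Sum>j\<in>UNIV. complex_of_real (A i j) * f j)"

definition sup_norm :: "('v::finite \<Rightarrow> complex) \<Rightarrow> real" where
  "sup_norm f = Max (range (\<lambda>v. cmod (f v)))"

end

theory Submission
  imports Defs "HOL-Analysis.Analysis"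
begin

(* Since the graph is connected, the kernel of L consists of the constant vectors, so
   ||L x||^2 >= c ||x||^2 for some c > 0 on the sum-zero vectors.  The flow y' = -L^2 y
   preserves the sum and satisfies (||y||^2)' = -2 ||L y||^2 <= -2c ||y||^2, hence decays
   exponentially there.  Applied to e_j - 1/n this shows that every entry of e^{-tL^2}
   tends to 1/n > 0.  A matrix with positive entries and row sums 1 (the rows of L^2 sum
   to 0) is positive and contracts the sup norm. *)

section \<open>Powers and exponentials of matrices\<close>

lemma mat_pow_two: "mat_pow C 2 = mat_mult C C"
proof -
  have "mat_pow C 1 = C"
    by (simp add: fun_eq_iff mat_mult_def if_distrib[of "(*) _"] cong: if_cong)
  then show ?thesis by (simp add: numeral_2_eq_2)
qed

lemma mat_mult_apply:
  "(\<Sum>j\<in>UNIV. mat_mult A B i j * x j) = (\<Sum>l\<in>UNIV. A i l * (\<Sum>j\<in>UNIV. B l j * x j))"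
proof -
  have "(\<Sum>j\<in>UNIV. mat_mult A B i j * x j) = (\<Sum>j\<in>UNIV. \<Sum>l\<in>UNIV. A i l * (B l j * x j))"
    by (simp add: mat_mult_def sum_distrib_right mult.assoc)
  also have "\<dots> = (\<Sum>l\<in>UNIV. \<Sum>j\<in>UNIV. A i l * (B l j * x j))"
    by (rule sum.swap)
  finally show ?thesis
    by (simp add: sum_distrib_left)
qed

lemma mat_pow_scale: "mat_pow (\<lambda>a b. s * C a b) k i j = s ^ k * mat_pow C k i j"
  by (induction k arbitrary: i j) (simp_all add: mat_mult_def sum_distrib_left mult_ac)

lemma abs_mat_pow_le: "\<bar>mat_pow C k i j\<bar> \<le> (\<Sum>a\<in>UNIV. \<Sum>b\<in>UNIV. \<bar>C a b\<bar>) ^ k"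
proof (induction k arbitrary: i j)
  case 0 then show ?case by simp
next
  case (Suc k)
  let ?R = "(\<Sum>a\<in>UNIV. \<Sum>b\<in>UNIV. \<bar>C a b\<bar>)"
  have "\<bar>mat_pow C (Suc k) i j\<bar> = \<bar>\<Sum>l\<in>UNIV. C i l * mat_pow C k l j\<bar>"
    by (simp add: mat_mult_def)
  also have "\<dots> \<le> (\<Sum>l\<in>UNIV. \<bar>C i l * mat_pow C k l j\<bar>)" by (rule sum_abs)
  also have "\<dots> \<le> (\<Sum>l\<in>UNIV. \<bar>C i l\<bar> * ?R ^ k)"
    by (rule sum_mono) (simp add: abs_mult mult_left_mono Suc.IH)
  also have "\<dots> = (\<Sum>l\<in>UNIV. \<bar>C i l\<bar>) * ?R ^ k" by (simp add: sum_distrib_right)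
  also have "\<dots> \<le> ?R * ?R ^ k"
  proof (rule mult_right_mono)
    show "(\<Sum>l\<in>UNIV. \<bar>C i l\<bar>) \<le> ?R"
      by (rule member_le_sum[of i UNIV "\<lambda>a. \<Sum>b\<in>UNIV. \<bar>C a b\<bar>", simplified])
    show "0 \<le> ?R ^ k" by (simp add: sum_nonneg)
  qed
  finally show ?case by simp
qed

lemma summable_mat_pow_entry: "summable (\<lambda>k. mat_pow C k i j / fact k * r ^ k)"
proof -
  let ?R = "\<Sum>a\<in>UNIV. \<Sum>b\<in>UNIV. \<bar>C a b\<bar>"
  show ?thesis
  proof (rule summable_comparison_test'[OF summable_exp[of "?R * \<bar>r\<bar>"]])
    fix k
    have "norm (mat_pow C k i j / fact k * r ^ k) = \<bar>mat_pow C k i j\<bar> * \<bar>r\<bar> ^ k / fact k"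
      by (simp add: abs_mult power_abs)
    also have "\<dots> \<le> ?R ^ k * \<bar>r\<bar> ^ k / fact k"
      by (intro divide_right_mono mult_right_mono abs_mat_pow_le) auto
    finally show "norm (mat_pow C k i j / fact k * r ^ k) \<le> inverse (fact k) * (?R * \<bar>r\<bar>) ^ k"
      by (simp add: power_mult_distrib field_simps)
  qed
qed

lemma mat_mult_row_sum_zero:
  assumes "\<And>k. (\<Sum>j\<in>UNIV. B k j) = 0"
  shows "(\<Sum>j\<in>UNIV. mat_mult A B i j) = 0"
proof -
  have "(\<Sum>j\<in>UNIV. mat_mult A B i j) = (\<Sum>k\<in>UNIV. A i k * (\<Sum>j\<in>UNIV. B k j))"
    by (simp add: mat_mult_def sum_distrib_left) (rule sum.swap)
  then show ?thesis by (simp add: assms)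
qed

lemma mat_mult_col_sum_zero:
  assumes "\<And>k. (\<Sum>i\<in>UNIV. A i k) = 0"
  shows "(\<Sum>i\<in>UNIV. mat_mult A B i j) = 0"
proof -
  have "(\<Sum>i\<in>UNIV. mat_mult A B i j) = (\<Sum>k\<in>UNIV. (\<Sum>i\<in>UNIV. A i k) * B k j)"
    by (simp add: mat_mult_def sum_distrib_right) (rule sum.swap)
  then show ?thesis by (simp add: assms)
qed

lemma mat_pow_row_sum:
  assumes "\<And>i. (\<Sum>j\<in>UNIV. C i j) = 0"
  shows "(\<Sum>j\<in>UNIV. mat_pow C k i j) = (if k = 0 then 1 else 0)"
proof (induction k arbitrary: i)
  case (Suc k)
  have "(\<Sum>j\<in>UNIV. mat_pow C (Suc k) i j) = (\<Sum>l\<in>UNIV. C i l * (\<Sum>j\<in>UNIV. mat_pow C k l j))"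
    by (simp add: mat_mult_def sum_distrib_left) (rule sum.swap)
  then show ?case
    by (simp add: Suc.IH flip: sum_distrib_right) (simp add: assms)
qed simp

lemma mat_exp_row_sum:
  assumes "\<And>i. (\<Sum>j\<in>UNIV. C i j) = 0"
  shows "(\<Sum>j\<in>UNIV. mat_exp C i j) = 1"
proof -
  have "(\<Sum>j\<in>UNIV. mat_exp C i j) = (\<Sum>k. \<Sum>j\<in>UNIV. mat_pow C k i j / fact k)"
    unfolding mat_exp_def using summable_mat_pow_entry[of C i _ 1]
    by (intro suminf_sum[symmetric]) simp
  also have "\<dots> = (\<Sum>k. if k = 0 then 1 else 0)"
    by (simp add: sum_divide_distrib[symmetric] mat_pow_row_sum[OF assms])
      (intro arg_cong[where f=suminf] ext, simp)
  also have "\<dots> = 1"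
    using sums_single[of 0 "\<lambda>_. 1::real"] by (simp add: sums_iff)
  finally show ?thesis .
qed

section \<open>The flow of a linear system of ODEs\<close>

definition exp_flow :: "('v::finite \<Rightarrow> 'v \<Rightarrow> real) \<Rightarrow> ('v \<Rightarrow> real) \<Rightarrow> real \<Rightarrow> 'v \<Rightarrow> real" where
  "exp_flow D x t i = (\<Sum>j\<in>UNIV. mat_exp (\<lambda>a b. t * D a b) i j * x j)"

definition flow_coeff :: "('v::finite \<Rightarrow> 'v \<Rightarrow> real) \<Rightarrow> ('v \<Rightarrow> real) \<Rightarrow> nat \<Rightarrow> 'v \<Rightarrow> real" where
  "flow_coeff D x k i = (\<Sum>j\<in>UNIV. mat_pow D k i j * x j) / fact k"

lemma flow_coeff_mult_power:
  "flow_coeff D x k i * t ^ k = (\<Sum>j\<in>UNIV. mat_pow D k i j / fact k * t ^ k * x j)"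
  unfolding flow_coeff_def sum_divide_distrib sum_distrib_right
  by (rule sum.cong) (simp_all add: mult_ac)

lemma summable_flow_coeff: "summable (\<lambda>k. flow_coeff D x k i * t ^ k)"
  unfolding flow_coeff_mult_power
  by (intro summable_sum summable_mult2 summable_mat_pow_entry)

lemma exp_flow_power_series: "exp_flow D x t i = (\<Sum>k. flow_coeff D x k i * t ^ k)"
proof -
  have "(\<Sum>k. t ^ k * mat_pow D k i j / fact k) * x j
      = (\<Sum>k. mat_pow D k i j / fact k * t ^ k * x j)" for j
    using suminf_mult2[OF summable_mat_pow_entry, of D i j t "x j"] by (simp add: mult_ac)
  then have "exp_flow D x t i = (\<Sum>j\<in>UNIV. \<Sum>k. mat_pow D k i j / fact k * t ^ k * x j)"
    unfolding exp_flow_def mat_exp_def mat_pow_scale by simp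
  also have "\<dots> = (\<Sum>k. \<Sum>j\<in>UNIV. mat_pow D k i j / fact k * t ^ k * x j)"
    by (intro suminf_sum[symmetric] summable_mult2 summable_mat_pow_entry)
  finally show ?thesis
    unfolding flow_coeff_mult_power .
qed

lemma exp_flow_0: "exp_flow D x 0 i = x i"
proof -
  have "exp_flow D x 0 i = flow_coeff D x 0 i"
    unfolding exp_flow_power_series using powser_zero[of "\<lambda>k. flow_coeff D x k i"] by simp
  then show ?thesis
    by (simp add: flow_coeff_def if_distrib[of "\<lambda>a. a * _"] cong: if_cong)
qed

lemma exp_flow_has_derivative:
  "((\<lambda>t. exp_flow D x t i) has_real_derivative (\<Sum>l\<in>UNIV. D i l * exp_flow D x t l)) (at t)"
proof -
  have diffs_eq: "diffs (\<lambda>k. flow_coeff D x k i) k * t ^ k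
      = (\<Sum>l\<in>UNIV. D i l * (flow_coeff D x k l * t ^ k))" for k
  proof -
    have "diffs (\<lambda>k. flow_coeff D x k i) k = (\<Sum>l\<in>UNIV. D i l * flow_coeff D x k l)"
      unfolding diffs_def flow_coeff_def mat_pow.simps mat_mult_apply
      by (simp add: fact_Suc flip: sum_divide_distrib del: of_nat_Suc)
    then show ?thesis
      by (simp add: sum_distrib_left mult_ac)
  qed
  have "(\<Sum>k. diffs (\<lambda>k. flow_coeff D x k i) k * t ^ k)
      = (\<Sum>l\<in>UNIV. \<Sum>k. D i l * (flow_coeff D x k l * t ^ k))"
    unfolding diffs_eq by (intro suminf_sum summable_mult summable_flow_coeff)
  also have "\<dots> = (\<Sum>l\<in>UNIV. D i l * exp_flow D x t l)"
    unfolding exp_flow_power_series by (intro sum.cong refl suminf_mult summable_flow_coeff)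
  finally have "(\<Sum>k. diffs (\<lambda>k. flow_coeff D x k i) k * t ^ k)
      = (\<Sum>l\<in>UNIV. D i l * exp_flow D x t l)" .
  moreover have "((\<lambda>t. \<Sum>k. flow_coeff D x k i * t ^ k) has_real_derivative
      (\<Sum>k. diffs (\<lambda>k. flow_coeff D x k i) k * t ^ k)) (at t)"
    by (rule termdiffs_strong_converges_everywhere[OF summable_flow_coeff])
  moreover have "(\<lambda>t. exp_flow D x t i) = (\<lambda>t. \<Sum>k. flow_coeff D x k i * t ^ k)"
    by (simp add: fun_eq_iff exp_flow_power_series)
  ultimately show ?thesis
    by simp
qed

lemma exp_flow_sum:
  assumes "\<And>j. (\<Sum>i\<in>UNIV. D i j) = 0"
  shows "(\<Sum>i\<in>UNIV. exp_flow D x t i) = (\<Sum>i\<in>UNIV. x i)"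
proof -
  have "((\<lambda>t. \<Sum>i\<in>UNIV. exp_flow D x t i) has_real_derivative
      (\<Sum>i\<in>UNIV. \<Sum>l\<in>UNIV. D i l * exp_flow D x s l)) (at s)" for s
    by (intro DERIV_sum exp_flow_has_derivative)
  moreover have "(\<Sum>i\<in>UNIV. \<Sum>l\<in>UNIV. D i l * exp_flow D x s l)
      = (\<Sum>l\<in>UNIV. (\<Sum>i\<in>UNIV. D i l) * exp_flow D x s l)" for s
    unfolding sum_distrib_right by (rule sum.swap)
  ultimately have "((\<lambda>t. \<Sum>i\<in>UNIV. exp_flow D x t i) has_real_derivative 0) (at s)" for s
    by (simp add: assms)
  then have "(\<Sum>i\<in>UNIV. exp_flow D x t i) = (\<Sum>i\<in>UNIV. exp_flow D x 0 i)"
    using DERIV_isconst_all[of "\<lambda>t. \<Sum>i\<in>UNIV. exp_flow D x t i"] by blast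
  then show ?thesis
    by (simp add: exp_flow_0)
qed

lemma exp_bound_of_deriv_le:
  fixes g g' :: "real \<Rightarrow> real"
  assumes deriv: "\<And>s. (g has_real_derivative g' s) (at s)"
    and le: "\<And>s. g' s \<le> - k * g s"
    and "0 \<le> t"
  shows "g t \<le> exp (- k * t) * g 0"
proof -
  define h where "h s = exp (k * s) * g s" for s
  have "(h has_real_derivative exp (k * s) * (k * g s + g' s)) (at s)" for s
    unfolding h_def by (auto intro!: derivative_eq_intros deriv simp: algebra_simps)
  moreover have "exp (k * s) * (k * g s + g' s) \<le> 0" for s
    using le[of s] by (intro mult_nonneg_nonpos) auto
  ultimately have "h t \<le> h 0"
    using DERIV_nonpos_imp_nonincreasing[OF \<open>0 \<le> t\<close>, of h] by blast
  then show ?thesis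
    by (simp add: h_def exp_minus field_simps)
qed

lemma exp_flow_decay:
  assumes col: "\<And>j. (\<Sum>i\<in>UNIV. D i j) = 0"
    and dissipative: "\<And>y. (\<Sum>i\<in>UNIV. y i) = 0 \<Longrightarrow>
      (\<Sum>i\<in>UNIV. y i * (\<Sum>l\<in>UNIV. D i l * y l)) \<le> - c * (\<Sum>i\<in>UNIV. (y i)\<^sup>2)"
    and "(\<Sum>i\<in>UNIV. x i) = 0" and "0 \<le> t"
  shows "(\<Sum>i\<in>UNIV. (exp_flow D x t i)\<^sup>2) \<le> exp (- (2 * c) * t) * (\<Sum>i\<in>UNIV. (x i)\<^sup>2)"
proof -
  let ?g = "\<lambda>s. \<Sum>i\<in>UNIV. (exp_flow D x s i)\<^sup>2"
  let ?g' = "\<lambda>s. 2 * (\<Sum>i\<in>UNIV. exp_flow D x s i * (\<Sum>l\<in>UNIV. D i l * exp_flow D x s l))"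
  have "(?g has_real_derivative ?g' s) (at s)" for s
    by (auto intro!: derivative_eq_intros exp_flow_has_derivative simp: sum_distrib_left mult_ac)
  moreover have "?g' s \<le> - (2 * c) * ?g s" for s
    using dissipative[of "exp_flow D x s"] exp_flow_sum[OF col] \<open>(\<Sum>i\<in>UNIV. x i) = 0\<close> by simp
  ultimately show ?thesis
    using exp_bound_of_deriv_le[of ?g ?g' "2 * c" t] \<open>0 \<le> t\<close> by (simp add: exp_flow_0)
qed

lemma exp_flow_unit_minus_mean:
  fixes D :: "'v::finite \<Rightarrow> 'v \<Rightarrow> real"
  assumes "\<And>i. (\<Sum>j\<in>UNIV. D i j) = 0"
  shows "exp_flow D (\<lambda>l. (if l = j then 1 else 0) - 1 / CARD('v)) t i
    = mat_exp (\<lambda>a b. t * D a b) i j - 1 / CARD('v)"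
proof -
  have "(\<Sum>l\<in>UNIV. mat_exp (\<lambda>a b. t * D a b) i l) = 1"
    by (rule mat_exp_row_sum) (simp add: assms flip: sum_distrib_left)
  then show ?thesis
    by (simp add: exp_flow_def right_diff_distrib sum_subtractf if_distrib[of "\<lambda>a. _ * a"]
        flip: sum_divide_distrib cong: if_cong)
qed

lemma mat_exp_entry_deviation:
  fixes D :: "'v::finite \<Rightarrow> 'v \<Rightarrow> real"
  assumes row: "\<And>i. (\<Sum>j\<in>UNIV. D i j) = 0"
    and col: "\<And>j. (\<Sum>i\<in>UNIV. D i j) = 0"
    and dissipative: "\<And>y. (\<Sum>i\<in>UNIV. y i) = 0 \<Longrightarrow>
      (\<Sum>i\<in>UNIV. y i * (\<Sum>l\<in>UNIV. D i l * y l)) \<le> - c * (\<Sum>i\<in>UNIV. (y i)\<^sup>2)"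
    and "0 \<le> t"
  shows "(mat_exp (\<lambda>a b. t * D a b) i j - 1 / CARD('v))\<^sup>2 \<le> exp (- (2 * c) * t) * CARD('v)"
proof -
  define x :: "'v \<Rightarrow> real" where "x = (\<lambda>l. (if l = j then 1 else 0) - 1 / CARD('v))"
  have "(\<Sum>l\<in>UNIV. x l) = 0"
    by (simp add: x_def sum_subtractf)
  have "(\<Sum>l\<in>UNIV. (x l)\<^sup>2) \<le> (\<Sum>l\<in>(UNIV::'v set). 1)"
    by (intro sum_mono) (auto simp: x_def power_le_one_iff abs_square_le_1 Suc_leI)
  have "(mat_exp (\<lambda>a b. t * D a b) i j - 1 / CARD('v))\<^sup>2 = (exp_flow D x t i)\<^sup>2"
    unfolding x_def exp_flow_unit_minus_mean[OF row] ..
  also have "\<dots> \<le> (\<Sum>l\<in>UNIV. (exp_flow D x t l)\<^sup>2)"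
    by (rule member_le_sum) auto
  also have "\<dots> \<le> exp (- (2 * c) * t) * (\<Sum>l\<in>UNIV. (x l)\<^sup>2)"
    by (rule exp_flow_decay[OF col dissipative \<open>(\<Sum>l\<in>UNIV. x l) = 0\<close> \<open>0 \<le> t\<close>])
  also have "\<dots> \<le> exp (- (2 * c) * t) * CARD('v)"
    using \<open>(\<Sum>l\<in>UNIV. (x l)\<^sup>2) \<le> (\<Sum>l\<in>UNIV. 1)\<close> by simp
  finally show ?thesis .
qed

lemma mat_exp_eventually_pos:
  fixes D :: "'v::finite \<Rightarrow> 'v \<Rightarrow> real"
  assumes row: "\<And>i. (\<Sum>j\<in>UNIV. D i j) = 0"
    and col: "\<And>j. (\<Sum>i\<in>UNIV. D i j) = 0"
    and "c > 0"
    and dissipative: "\<And>y. (\<Sum>i\<in>UNIV. y i) = 0 \<Longrightarrow>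
      (\<Sum>i\<in>UNIV. y i * (\<Sum>l\<in>UNIV. D i l * y l)) \<le> - c * (\<Sum>i\<in>UNIV. (y i)\<^sup>2)"
  shows "eventually (\<lambda>t. \<forall>i j. mat_exp (\<lambda>a b. t * D a b) i j > 0) at_top"
proof -
  define n where "n = real CARD('v)"
  have "n \<ge> 1"
    by (simp add: n_def Suc_leI)
  have "eventually (\<lambda>t. 0 \<le> t \<and> ln (n ^ 3) / (2 * c) < t) at_top"
    by (intro eventually_conj eventually_ge_at_top eventually_gt_at_top)
  then show ?thesis
  proof (rule eventually_mono, elim conjE, intro allI)
    fix t i j
    assume "0 \<le> t" and "ln (n ^ 3) / (2 * c) < t"
    have "(mat_exp (\<lambda>a b. t * D a b) i j - 1 / n)\<^sup>2 \<le> exp (- (2 * c) * t) * n"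
      unfolding n_def by (rule mat_exp_entry_deviation[OF row col dissipative \<open>0 \<le> t\<close>])
    also have "\<dots> < (1 / n)\<^sup>2"
    proof -
      have "ln (n ^ 3) < 2 * c * t"
        using \<open>ln (n ^ 3) / (2 * c) < t\<close> \<open>c > 0\<close> by (simp add: field_simps)
      then have "n ^ 3 < exp (2 * c * t)"
        using \<open>n \<ge> 1\<close> by (metis exp_less_cancel_iff exp_ln zero_less_one less_le_trans zero_less_power)
      then show ?thesis
        using \<open>n \<ge> 1\<close> by (simp add: exp_minus field_simps power3_eq_cube power2_eq_square)
    qed
    finally have "(mat_exp (\<lambda>a b. t * D a b) i j - 1 / n)\<^sup>2 < (1 / n)\<^sup>2" .
    then have "\<bar>mat_exp (\<lambda>a b. t * D a b) i j - 1 / n\<bar> < 1 / n"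
      using power2_less_imp_less[of "\<bar>mat_exp (\<lambda>a b. t * D a b) i j - 1 / n\<bar>" "1 / n"] \<open>n \<ge> 1\<close>
      by simp
    then show "mat_exp (\<lambda>a b. t * D a b) i j > 0"
      by linarith
  qed
qed

lemma quadratic_form_mat_mult_self:
  assumes "\<And>i j. L i j = L j i"
  shows "(\<Sum>i\<in>UNIV. y i * (\<Sum>l\<in>UNIV. mat_mult L L i l * y l)) = (\<Sum>k\<in>UNIV. (\<Sum>l\<in>UNIV. L k l * y l)\<^sup>2)"
proof -
  define z where "z k = (\<Sum>l\<in>UNIV. L k l * y l)" for k
  have "(\<Sum>i\<in>UNIV. y i * (\<Sum>l\<in>UNIV. mat_mult L L i l * y l)) = (\<Sum>i\<in>UNIV. \<Sum>k\<in>UNIV. y i * L i k * z k)"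
    by (simp add: mat_mult_apply z_def sum_distrib_left mult.assoc)
  also have "\<dots> = (\<Sum>k\<in>UNIV. \<Sum>i\<in>UNIV. y i * L i k * z k)"
    by (rule sum.swap)
  also have "\<dots> = (\<Sum>k\<in>UNIV. z k * z k)"
    by (simp add: z_def sum_distrib_right assms[of _ k for k] mult_ac)
  finally show ?thesis
    by (simp add: z_def power2_eq_square)
qed

lemma coercive_on_sum_zero:
  fixes L :: "'v::finite \<Rightarrow> 'v \<Rightarrow> real"
  assumes ker: "\<And>x. (\<Sum>i\<in>UNIV. x i) = 0 \<Longrightarrow> (\<And>i. (\<Sum>j\<in>UNIV. L i j * x j) = 0) \<Longrightarrow> x = (\<lambda>_. 0)"
  obtains c where "c > 0"
    and "\<And>x. (\<Sum>i\<in>UNIV. x i) = 0 \<Longrightarrow> c * (\<Sum>i\<in>UNIV. (x i)\<^sup>2) \<le> (\<Sum>i\<in>UNIV. (\<Sum>j\<in>UNIV. L i j * x j)\<^sup>2)"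
proof -
  define f where "f z = (\<chi> i. \<Sum>j\<in>UNIV. L i j * z $ j)" for z :: "real ^ 'v"
  define one :: "real ^ 'v" where "one = (\<chi> i. 1)"
  have "bounded_linear f"
    unfolding f_def
    by (auto simp: linear_iff vec_eq_iff sum.distrib sum_distrib_left algebra_simps
        intro: linear_conv_bounded_linear[THEN iffD1])
  moreover have "\<forall>z\<in>{z. inner one z = 0}. f z = 0 \<longrightarrow> z = 0"
  proof (intro ballI impI)
    fix z
    assume "z \<in> {z. inner one z = 0}" and "f z = 0"
    then have "(\<lambda>j. z $ j) = (\<lambda>_. 0)"
      by (intro ker) (simp_all add: one_def inner_vec_def f_def vec_eq_iff)
    then show "z = 0"
      by (simp add: vec_eq_iff fun_eq_iff)
  qed
  ultimately obtain e where "e > 0" and e: "\<forall>z\<in>{z. inner one z = 0}. e * norm z \<le> norm (f z)"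
    using injective_imp_isometric[OF closed_hyperplane subspace_hyperplane] by blast
  show ?thesis
  proof
    show "e\<^sup>2 > 0"
      using \<open>e > 0\<close> by simp
    fix x :: "'v \<Rightarrow> real"
    assume "(\<Sum>i\<in>UNIV. x i) = 0"
    then have "e * norm (vec_lambda x) \<le> norm (f (vec_lambda x))"
      using e by (simp add: one_def inner_vec_def)
    then have "(e * norm (vec_lambda x))\<^sup>2 \<le> (norm (f (vec_lambda x)))\<^sup>2"
      using \<open>e > 0\<close> by (intro power_mono) auto
    moreover have "(norm (vec_lambda x))\<^sup>2 = (\<Sum>i\<in>UNIV. (x i)\<^sup>2)"
      by (simp only: power2_norm_eq_inner) (simp add: inner_vec_def power2_eq_square)
    moreover have "(norm (f (vec_lambda x)))\<^sup>2 = (\<Sum>i\<in>UNIV. (\<Sum>j\<in>UNIV. L i j * x j)\<^sup>2)"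
      by (simp only: power2_norm_eq_inner) (simp add: inner_vec_def f_def power2_eq_square)
    ultimately show "e\<^sup>2 * (\<Sum>i\<in>UNIV. (x i)\<^sup>2) \<le> (\<Sum>i\<in>UNIV. (\<Sum>j\<in>UNIV. L i j * x j)\<^sup>2)"
      by (simp add: power_mult_distrib)
  qed
qed

section \<open>Sub-Markovian matrices\<close>

definition sub_markovian :: "('v::finite \<Rightarrow> 'v \<Rightarrow> real) \<Rightarrow> bool" where
  "sub_markovian M \<longleftrightarrow>
    (\<forall>f::'v \<Rightarrow> complex. (\<forall>v. f v \<in> \<real> \<and> 0 \<le> Re (f v)) \<longrightarrow>
       (\<forall>v. mat_vec M f v \<in> \<real> \<and> 0 \<le> Re (mat_vec M f v))) \<and>
    (\<forall>f::'v \<Rightarrow> complex. sup_norm (mat_vec M f) \<le> sup_norm f)"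

lemma sup_norm_mat_vec_le:
  assumes nonneg: "\<And>i j. 0 \<le> M i j" and row: "\<And>i. (\<Sum>j\<in>UNIV. M i j) = 1"
  shows "sup_norm (mat_vec M f) \<le> sup_norm f"
proof -
  have bound: "cmod (f j) \<le> sup_norm f" for j
    unfolding sup_norm_def by (rule Max_ge) auto
  have "cmod (mat_vec M f v) \<le> sup_norm f" for v
  proof -
    have "cmod (mat_vec M f v) \<le> (\<Sum>j\<in>UNIV. cmod (complex_of_real (M v j) * f j))"
      unfolding mat_vec_def by (rule norm_sum)
    also have "\<dots> = (\<Sum>j\<in>UNIV. M v j * cmod (f j))"
      using nonneg by (simp add: norm_mult)
    also have "\<dots> \<le> (\<Sum>j\<in>UNIV. M v j * sup_norm f)"
      using nonneg bound by (intro sum_mono mult_left_mono) auto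
    finally show ?thesis
      by (simp add: row flip: sum_distrib_right)
  qed
  then show ?thesis
    unfolding sup_norm_def[of "mat_vec M f"] by (intro Max.boundedI) auto
qed

lemma sub_markovian_if_nonneg_row_sum_one:
  assumes nonneg: "\<And>i j. 0 \<le> M i j" and row: "\<And>i. (\<Sum>j\<in>UNIV. M i j) = 1"
  shows "sub_markovian M"
  unfolding sub_markovian_def
  using nonneg sup_norm_mat_vec_le[OF nonneg row] by (auto simp: mat_vec_def intro!: sum_nonneg)

lemma mat_exp_eventually_sub_markovian:
  fixes D :: "'v::finite \<Rightarrow> 'v \<Rightarrow> real"
  assumes row: "\<And>i. (\<Sum>j\<in>UNIV. D i j) = 0"
    and col: "\<And>j. (\<Sum>i\<in>UNIV. D i j) = 0"
    and "c > 0"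
    and dissipative: "\<And>y. (\<Sum>i\<in>UNIV. y i) = 0 \<Longrightarrow>
      (\<Sum>i\<in>UNIV. y i * (\<Sum>l\<in>UNIV. D i l * y l)) \<le> - c * (\<Sum>i\<in>UNIV. (y i)\<^sup>2)"
  shows "eventually (\<lambda>t. sub_markovian (mat_exp (\<lambda>a b. t * D a b))) at_top"
  using mat_exp_eventually_pos[OF row col \<open>c > 0\<close> dissipative]
proof (rule eventually_mono)
  fix t
  assume "\<forall>i j. mat_exp (\<lambda>a b. t * D a b) i j > 0"
  then have "0 \<le> mat_exp (\<lambda>a b. t * D a b) i j" for i j
    by (simp add: less_imp_le)
  moreover have "(\<Sum>j\<in>UNIV. mat_exp (\<lambda>a b. t * D a b) i j) = 1" for i
    by (rule mat_exp_row_sum) (metis row sum_distrib_left mult_zero_right)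
  ultimately show "sub_markovian (mat_exp (\<lambda>a b. t * D a b))"
    by (rule sub_markovian_if_nonneg_row_sum_one)
qed

lemma eventually_at_top_imp_pos_threshold:
  fixes P :: "real \<Rightarrow> bool"
  assumes "eventually P at_top"
  shows "\<exists>t0>0. \<forall>t\<ge>t0. P t"
proof -
  obtain N where "\<forall>t\<ge>N. P t"
    using assms unfolding eventually_at_top_linorder by blast
  then show ?thesis
    by (intro exI[of _ "max 1 N"]) auto
qed

section \<open>The graph Laplacian\<close>

lemma sum_incidence_mult:
  fixes x :: "'v::finite \<Rightarrow> real"
  assumes "fst e \<noteq> snd e"
  shows "(\<Sum>w\<in>UNIV. incidence w e * x w) = x (snd e) - x (fst e)"
proof -
  have "incidence w e * x w = (if w = snd e then x w else 0) - (if w = fst e then x w else 0)" for w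
    using assms by (auto simp: incidence_def)
  then show ?thesis
    by (simp add: sum_subtractf)
qed

lemma orientation_fst_neq_snd:
  assumes "simple_graph E" and "orientation E Eo" and "e \<in> Eo"
  shows "fst e \<noteq> snd e"
  using assms unfolding simple_graph_def orientation_def by (metis prod.collapse)

lemma laplacian_sym: "laplacian Eo i j = laplacian Eo j i"
  unfolding laplacian_def by (simp add: mult.commute)

lemma laplacian_row_sum:
  fixes Eo :: "('v::finite \<times> 'v) set"
  assumes "\<And>e. e \<in> Eo \<Longrightarrow> fst e \<noteq> snd e"
  shows "(\<Sum>j\<in>UNIV. laplacian Eo i j) = 0"
proof -
  have "(\<Sum>j\<in>UNIV. laplacian Eo i j) = (\<Sum>e\<in>Eo. incidence i e * (\<Sum>j\<in>UNIV. incidence j e * 1))"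
    unfolding laplacian_def sum_distrib_left by (simp add: sum.swap[of _ UNIV Eo])
  also have "\<dots> = 0"
  proof -
    have "(\<Sum>j\<in>UNIV. incidence j e * 1) = 0" if "e \<in> Eo" for e
      using sum_incidence_mult[OF assms[OF that], of "\<lambda>_. 1"] by simp
    then show ?thesis
      by simp
  qed
  finally show ?thesis .
qed

lemma laplacian_quadratic_form:
  fixes Eo :: "('v::finite \<times> 'v) set"
  assumes "\<And>e. e \<in> Eo \<Longrightarrow> fst e \<noteq> snd e"
  shows "(\<Sum>i\<in>UNIV. x i * (\<Sum>j\<in>UNIV. laplacian Eo i j * x j)) = (\<Sum>e\<in>Eo. (x (snd e) - x (fst e))\<^sup>2)"
proof -
  have "(\<Sum>i\<in>UNIV. x i * (\<Sum>j\<in>UNIV. laplacian Eo i j * x j))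
      = (\<Sum>i\<in>UNIV. \<Sum>e\<in>Eo. incidence i e * x i * (\<Sum>j\<in>UNIV. incidence j e * x j))"
    unfolding laplacian_def sum_distrib_right sum_distrib_left
    by (simp add: sum.swap[of _ UNIV Eo] mult_ac)
  also have "\<dots> = (\<Sum>e\<in>Eo. (\<Sum>i\<in>UNIV. incidence i e * x i) * (\<Sum>j\<in>UNIV. incidence j e * x j))"
    unfolding sum_distrib_right by (rule sum.swap)
  also have "\<dots> = (\<Sum>e\<in>Eo. (x (snd e) - x (fst e))\<^sup>2)"
    using assms by (simp add: sum_incidence_mult power2_eq_square)
  finally show ?thesis .
qed

lemma laplacian_kernel_constant:
  fixes E :: "'v::finite \<Rightarrow> 'v \<Rightarrow> bool"
  assumes "simple_graph E" and "connected_graph E" and "orientation E Eo"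
    and "\<And>i. (\<Sum>j\<in>UNIV. laplacian Eo i j * x j) = 0"
  shows "x u = x v"
proof -
  have "(\<Sum>e\<in>Eo. (x (snd e) - x (fst e))\<^sup>2) = 0"
    using laplacian_quadratic_form[of Eo x] orientation_fst_neq_snd[OF assms(1,3)] assms(4) by simp
  then have edge: "x (snd e) = x (fst e)" if "e \<in> Eo" for e
    using that sum_nonneg_eq_0_iff[of Eo "\<lambda>e. (x (snd e) - x (fst e))\<^sup>2"] by simp
  have step: "x a = x b" if "E a b" for a b
    using that edge[of "(a, b)"] edge[of "(b, a)"] \<open>orientation E Eo\<close>
    unfolding orientation_def by fastforce
  have "E\<^sup>*\<^sup>* u v"
    using \<open>connected_graph E\<close> unfolding connected_graph_def by blast
  then show ?thesis
    by (induction rule: rtranclp_induct) (auto dest: step)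
qed

lemma laplacian_square_row_col_sum:
  assumes "simple_graph E" and "orientation E Eo"
  shows "(\<Sum>j\<in>UNIV. mat_pow (laplacian Eo) 2 i j) = 0"
    and "(\<Sum>i\<in>UNIV. mat_pow (laplacian Eo) 2 i j) = 0"
proof -
  have row: "(\<Sum>j\<in>UNIV. laplacian Eo i j) = 0" for i
    using laplacian_row_sum orientation_fst_neq_snd[OF assms] by blast
  have col: "(\<Sum>i\<in>UNIV. laplacian Eo i j) = 0" for j
    using row[of j] by (simp add: laplacian_sym[of Eo _ j])
  show "(\<Sum>j\<in>UNIV. mat_pow (laplacian Eo) 2 i j) = 0"
    unfolding mat_pow_two by (rule mat_mult_row_sum_zero[OF row])
  show "(\<Sum>i\<in>UNIV. mat_pow (laplacian Eo) 2 i j) = 0"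
    unfolding mat_pow_two by (rule mat_mult_col_sum_zero[OF col])
qed

lemma laplacian_square_dissipative:
  fixes E :: "'v::finite \<Rightarrow> 'v \<Rightarrow> bool"
  assumes "simple_graph E" and "connected_graph E" and "orientation E Eo"
  obtains c where "c > 0"
    and "\<And>y. (\<Sum>i\<in>UNIV. y i) = 0 \<Longrightarrow>
      (\<Sum>i\<in>UNIV. y i * (\<Sum>l\<in>UNIV. - mat_pow (laplacian Eo) 2 i l * y l)) \<le> - c * (\<Sum>i\<in>UNIV. (y i)\<^sup>2)"
proof -
  have "x = (\<lambda>_. 0)"
    if "(\<Sum>i\<in>UNIV. x i) = 0" and "\<And>i. (\<Sum>j\<in>UNIV. laplacian Eo i j * x j) = 0"
    for x :: "'v \<Rightarrow> real"
  proof
    fix a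
    have "(\<Sum>i\<in>UNIV. x i) = (\<Sum>i\<in>(UNIV::'v set). x a)"
      using laplacian_kernel_constant[OF assms that(2)] by (intro sum.cong) auto
    then show "x a = 0"
      using that(1) by simp
  qed
  then obtain c where "c > 0" and c: "\<And>y. (\<Sum>i\<in>UNIV. y i) = 0 \<Longrightarrow>
      c * (\<Sum>i\<in>UNIV. (y i)\<^sup>2) \<le> (\<Sum>i\<in>UNIV. (\<Sum>j\<in>UNIV. laplacian Eo i j * y j)\<^sup>2)"
    using coercive_on_sum_zero by blast
  show ?thesis
  proof (rule that[OF \<open>c > 0\<close>])
    fix y :: "'v \<Rightarrow> real"
    assume "(\<Sum>i\<in>UNIV. y i) = 0"
    then show "(\<Sum>i\<in>UNIV. y i * (\<Sum>l\<in>UNIV. - mat_pow (laplacian Eo) 2 i l * y l))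
        \<le> - c * (\<Sum>i\<in>UNIV. (y i)\<^sup>2)"
      using c quadratic_form_mat_mult_self[of "laplacian Eo", OF laplacian_sym, of y]
      by (simp add: mat_pow_two sum_negf)
  qed
qed

theorem proposition6p7:
  fixes E :: "'v::finite \<Rightarrow> 'v \<Rightarrow> bool" and Eo :: "('v \<times> 'v) set"
  assumes "simple_graph E" and "connected_graph E" and "orientation E Eo"
  shows "\<exists>t0>0. \<forall>t\<ge>t0.
     let M = mat_exp (\<lambda>i j. - t * mat_pow (laplacian Eo) 2 i j) in
       (\<forall>f::'v \<Rightarrow> complex. (\<forall>v. f v \<in> \<real> \<and> 0 \<le> Re (f v)) \<longrightarrow>
            (\<forall>v. mat_vec M f v \<in> \<real> \<and> 0 \<le> Re (mat_vec M f v))) \<and>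
       (\<forall>f::'v \<Rightarrow> complex. sup_norm (mat_vec M f) \<le> sup_norm f)"
proof -
  define D where "D = (\<lambda>a b. - mat_pow (laplacian Eo) 2 a b)"
  have row: "(\<Sum>j\<in>UNIV. D i j) = 0" and col: "(\<Sum>i\<in>UNIV. D i j) = 0" for i j
    using laplacian_square_row_col_sum[OF assms(1,3)] by (simp_all add: D_def sum_negf)
  obtain c where "c > 0" and dissipative: "\<And>y. (\<Sum>i\<in>UNIV. y i) = 0 \<Longrightarrow>
      (\<Sum>i\<in>UNIV. y i * (\<Sum>l\<in>UNIV. D i l * y l)) \<le> - c * (\<Sum>i\<in>UNIV. (y i)\<^sup>2)"
    using laplacian_square_dissipative[OF assms] unfolding D_def by blast
  have scaled: "(\<lambda>i j. - t * mat_pow (laplacian Eo) 2 i j) = (\<lambda>a b. t * D a b)" for t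
    by (simp add: D_def)
  show ?thesis
    unfolding Let_def scaled sub_markovian_def[symmetric]
    by (intro eventually_at_top_imp_pos_threshold mat_exp_eventually_sub_markovian[OF row col \<open>c > 0\<close>]
        dissipative)
qed

end
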